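(* Let $H_0,H_1$ be complex Hilbert spaces, $G$ a densely defined closed operator from $H_0$ into $H_1$ and $D$ a densely defined closed operator from $H_1$ into $H_0$ with $-G^*\subset D$. Let $a\in\mathcal L(H_1)$ and $m\in\mathcal L(H_0)$ be coercive and let $q_0\in\mathrm{BD}(D)$. Then there exists a unique $u\in\mathrm{dom}(DaG)$ such that $mu-DaGu=0$ and $aGu-q_0\in\mathrm{dom}(\mathring D)$.
   Context: $\mathring D=-G^*$, $\mathring G=-D^*$. Domains carry graph inner products, e.g. $(q,r)_{\mathrm{dom}(D)}=(q,r)_{H_1}+(Dq,Dr)_{H_0}$. $\mathrm{BD}(D)$ is the orthogonal complement of $\mathrm{dom}(\mathring D)$ in $\mathrm{dom}(D)$. $\mathrm{dom}(DaG)=\{u\in\mathrm{dom}(G):aGu\in\mathrm{dom}(D)\}$. Coercive: $\mathrm{Re}(Mx,x)\ge\mu\|x\|^2$ for some $\mu>0$. *)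

theory Defs
  imports "HOL-Analysis.Analysis"
begin

text \<open>A complex Hilbert space is modelled as a real Hilbert space (type class
  real_inner + complete_space) together with a complex structure J
  (multiplication by the imaginary unit), which is real-linear, satisfies
  J (J x) = - x and is orthogonal.\<close>

definition complex_structure :: "('a::real_inner \<Rightarrow> 'a) \<Rightarrow> bool" where
  "complex_structure J \<longleftrightarrow> linear J \<and> (\<forall>x. J (J x) = - x) \<and> (\<forall>x y. inner (J x) (J y) = inner x y)"

definition cscale :: "('a::real_vector \<Rightarrow> 'a) \<Rightarrow> complex \<Rightarrow> 'a \<Rightarrow> 'a" where
  "cscale J c x = Re c *\<^sub>R x + Im c *\<^sub>R J x"

text \<open>Complex inner product (linear in the first, conjugate-linear in the second
  argument); its real part is the real inner product, so the norms agree.\<close>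
definition cinner :: "('a::real_inner \<Rightarrow> 'a) \<Rightarrow> 'a \<Rightarrow> 'a \<Rightarrow> complex" where
  "cinner J x y = Complex (inner x y) (inner x (J y))"

text \<open>(Possibly unbounded) operators are represented by their graphs.
  A complex-linear operator from H (structure J) to K (structure K'):
  the graph is a complex linear subspace and is single-valued.\<close>
definition lin_op :: "('a::real_vector \<Rightarrow> 'a) \<Rightarrow> ('b::real_vector \<Rightarrow> 'b) \<Rightarrow> ('a \<times> 'b) set \<Rightarrow> bool" where
  "lin_op J K T \<longleftrightarrow> subspace T \<and> (\<forall>(x,y)\<in>T. (J x, K y) \<in> T) \<and> (\<forall>y. (0, y) \<in> T \<longrightarrow> y = 0)"

definition op_app :: "('a \<times> 'b) set \<Rightarrow> 'a \<Rightarrow> 'b" where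
  "op_app T x = (THE y. (x, y) \<in> T)"

definition densely_defined :: "('a::topological_space \<times> 'b) set \<Rightarrow> bool" where
  "densely_defined T \<longleftrightarrow> closure (Domain T) = UNIV"

definition closed_op :: "('a::topological_space \<times> 'b::topological_space) set \<Rightarrow> bool" where
  "closed_op T \<longleftrightarrow> closed T"

definition adjoint :: "('a::real_inner \<Rightarrow> 'a) \<Rightarrow> ('b::real_inner \<Rightarrow> 'b) \<Rightarrow> ('a \<times> 'b) set \<Rightarrow> ('b \<times> 'a) set" where
  "adjoint J K T = {(y, z). \<forall>(x, w)\<in>T. cinner K w y = cinner J x z}"

definition neg_op :: "('a \<times> 'b::uminus) set \<Rightarrow> ('a \<times> 'b) set" where
  "neg_op T = {(x, - y) | x y. (x, y) \<in> T}"

definition cbounded :: "('a::real_normed_vector \<Rightarrow> 'a) \<Rightarrow> ('a \<Rightarrow> 'a) \<Rightarrow> bool" where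
  "cbounded J M \<longleftrightarrow> bounded_linear M \<and> (\<forall>x. M (J x) = J (M x))"

definition coercive :: "('a::real_inner \<Rightarrow> 'a) \<Rightarrow> ('a \<Rightarrow> 'a) \<Rightarrow> bool" where
  "coercive J M \<longleftrightarrow> (\<exists>\<mu>>0. \<forall>x. Re (cinner J (M x) x) \<ge> \<mu> * (norm x)\<^sup>2)"

text \<open>BD(D): orthogonal complement of dom(Dc) in dom(D) w.r.t. the graph inner
  product of dom(D); here D : H1 \<rightarrow> H0, Dc is the operator with D-ring (Dc \<subseteq> D).\<close>
definition BD :: "('a::real_inner \<Rightarrow> 'a) \<Rightarrow> ('b::real_inner \<Rightarrow> 'b) \<Rightarrow> ('b \<times> 'a) set \<Rightarrow> ('b \<times> 'a) set \<Rightarrow> 'b set" where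
  "BD J0 J1 D Dc = {q \<in> Domain D. \<forall>r \<in> Domain Dc.
      cinner J1 q r + cinner J0 (op_app D q) (op_app D r) = 0}"

end

theory Submission
  imports Defs
begin

text \<open>The graph of G is a closed subspace of H0 \<times> H1 on which the real form
  ((u, g), (x, h)) \<mapsto> \<langle>m u, x\<rangle> + \<langle>a g, h\<rangle> is bounded and coercive. By the
  Lax-Milgram theorem (via the projection theorem and Banach's fixed point theorem)
  there is exactly one u \<in> dom G with \<langle>m u - D q0, x\<rangle> + \<langle>a G u - q0, g\<rangle> = 0 for all
  (x, g) in the graph. As the graph is invariant under the complex structures, this
  real identity already says that a G u - q0 \<in> dom G* with G* (a G u - q0) = D q0 - m u,
  and since -G* \<subseteq> D this is equivalent to a G u \<in> dom D, D a G u = m u and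
  a G u - q0 \<in> dom G*.\<close>

lemma norm_diff_le_of_near_minimal:
  fixes S :: "'h::real_inner set"
  assumes "convex S" "p \<in> S" "q \<in> S" and min: "\<And>s. s \<in> S \<Longrightarrow> d \<le> norm (h - s)^2"
  shows "norm (p - q)^2 \<le> 2 * (norm (h - p)^2 - d) + 2 * (norm (h - q)^2 - d)"
proof -
  have "(1/2) *\<^sub>R p + (1/2) *\<^sub>R q \<in> S"
    using assms(1-3) by (rule convexD) auto
  then have "d \<le> norm (h - ((1/2) *\<^sub>R p + (1/2) *\<^sub>R q))^2" by (rule min)
  moreover have "norm (p - q)^2 = 2 * norm (h - p)^2 + 2 * norm (h - q)^2
      - 4 * norm (h - ((1/2) *\<^sub>R p + (1/2) *\<^sub>R q))^2"
    by (simp add: power2_norm_eq_inner inner_diff inner_add inner_commute algebra_simps)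
  ultimately show ?thesis by (simp add: algebra_simps)
qed

lemma closed_convex_nearest_point_exists:
  fixes S :: "'h::{real_inner,complete_space} set"
  assumes "convex S" "closed S" "S \<noteq> {}"
  obtains p where "p \<in> S" "\<And>s. s \<in> S \<Longrightarrow> norm (h - p) \<le> norm (h - s)"
proof -
  define d where "d = (INF s\<in>S. norm (h - s)^2)"
  have bdd: "bdd_below ((\<lambda>s. norm (h - s)^2) ` S)" by (rule bdd_belowI[of _ 0]) auto
  have d_le: "d \<le> norm (h - s)^2" if "s \<in> S" for s
    unfolding d_def using bdd that by (rule cINF_lower)
  have "\<exists>s\<in>S. norm (h - s)^2 < d + inverse (real (Suc n))" for n
    using cINF_less_iff[OF \<open>S \<noteq> {}\<close> bdd, of "d + inverse (real (Suc n))"]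
    by (simp flip: d_def)
  then obtain p where pS: "\<And>n. p n \<in> S"
    and p_near: "\<And>n. norm (h - p n)^2 < d + inverse (real (Suc n))"
    by metis
  have "Cauchy p"
  proof (rule CauchyI)
    fix e :: real assume "0 < e"
    then obtain N where N: "inverse (real (Suc N)) < e^2 / 4"
      using reals_Archimedean[of "e^2 / 4"] by auto
    have small: "inverse (real (Suc n)) < e^2 / 4" if "N \<le> n" for n
      using that by (intro order_le_less_trans[OF _ N] le_imp_inverse_le) auto
    have "norm (p n - p k) < e" if "N \<le> n" "N \<le> k" for n k
    proof -
      have "norm (p n - p k)^2 \<le> 2 * (norm (h - p n)^2 - d) + 2 * (norm (h - p k)^2 - d)"
        by (rule norm_diff_le_of_near_minimal[OF assms(1) pS pS]) (rule d_le)
      then have "norm (p n - p k)^2 < e^2"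
        using p_near[of n] p_near[of k] small[OF that(1)] small[OF that(2)] by argo
      then show ?thesis using \<open>0 < e\<close> by (simp add: power_less_imp_less_base)
    qed
    then show "\<exists>N. \<forall>n\<ge>N. \<forall>k\<ge>N. norm (p n - p k) < e" by blast
  qed
  then obtain q where lim: "p \<longlonglongrightarrow> q" by (auto simp: convergent_eq_Cauchy[symmetric])
  have "q \<in> S" using closed_sequentially[OF assms(2) pS lim] .
  have "(\<lambda>n. norm (h - p n)^2) \<longlonglongrightarrow> norm (h - q)^2"
    by (intro tendsto_intros lim)
  moreover have "(\<lambda>n. d + inverse (real (Suc n))) \<longlonglongrightarrow> d + 0"
    by (intro tendsto_intros LIMSEQ_inverse_real_of_nat)
  ultimately have "norm (h - q)^2 \<le> d"
    using p_near by (simp add: LIMSEQ_le less_imp_le)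
  then have "norm (h - q) \<le> norm (h - s)" if "s \<in> S" for s
    using d_le[OF that] by (simp add: power2_le_imp_le)
  with \<open>q \<in> S\<close> show ?thesis by (rule that)
qed

lemma nearest_point_subspace_orthogonal:
  fixes X :: "'h::real_inner set"
  assumes "subspace X" "p \<in> X" and nearest: "\<And>x. x \<in> X \<Longrightarrow> norm (h - p) \<le> norm (h - x)"
    and "v \<in> X"
  shows "inner (h - p) v = 0"
proof (cases "v = 0")
  case False
  define c where "c = inner (h - p) v"
  define t where "t = c / inner v v"
  have "p + t *\<^sub>R v \<in> X" using assms by (simp add: subspace_add subspace_scale)
  then have "norm (h - p)^2 \<le> norm ((h - p) - t *\<^sub>R v)^2"
    using nearest by (simp add: diff_diff_eq power_mono)
  then have "0 \<le> t * t * inner v v - 2 * t * c"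
    by (simp add: c_def power2_norm_eq_inner inner_diff inner_commute algebra_simps)
  also have "t * t * inner v v - 2 * t * c = - (c * c / inner v v)"
    using False by (simp add: t_def field_simps power2_eq_square)
  finally have "c * c / inner v v \<le> 0" by simp
  moreover have "inner v v > 0" using False by simp
  ultimately have "c * c \<le> 0" by (auto simp: divide_le_0_iff)
  then show ?thesis
    unfolding c_def by (smt (verit) mult_le_0_iff)
qed simp

definition orthogonal_projection_on :: "'h::real_inner set \<Rightarrow> ('h \<Rightarrow> 'h) \<Rightarrow> bool" where
  "orthogonal_projection_on X P \<longleftrightarrow> (\<forall>h. P h \<in> X \<and> (\<forall>v\<in>X. inner (h - P h) v = 0))"

lemma orthogonal_projection_onD:
  assumes "orthogonal_projection_on X P"
  shows orthogonal_projection_in: "P h \<in> X"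
    and orthogonal_projection_orthogonal: "v \<in> X \<Longrightarrow> inner (h - P h) v = 0"
  using assms by (auto simp: orthogonal_projection_on_def)

lemma orthogonal_projection_exists:
  fixes X :: "'h::{real_inner,complete_space} set"
  assumes "subspace X" "closed X"
  obtains P where "orthogonal_projection_on X P"
proof -
  have "\<exists>p\<in>X. \<forall>v\<in>X. inner (h - p) v = 0" for h
  proof -
    have "convex X" "X \<noteq> {}"
      using subspace_imp_convex[OF assms(1)] subspace_0[OF assms(1)] by auto
    then obtain p where "p \<in> X" "\<And>x. x \<in> X \<Longrightarrow> norm (h - p) \<le> norm (h - x)"
      using closed_convex_nearest_point_exists assms(2) by metis
    then show ?thesis
      using nearest_point_subspace_orthogonal[OF assms(1)] by blast
  qed
  then show ?thesis
    using that unfolding orthogonal_projection_on_def by metis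
qed

lemma orthogonal_projection_diff:
  assumes P: "orthogonal_projection_on X P" and "subspace X"
  shows "P (x - y) = P x - P y"
proof -
  define r where "r = P x - P y - P (x - y)"
  have "r \<in> X"
    using \<open>subspace X\<close> by (simp add: r_def orthogonal_projection_in[OF P] subspace_diff)
  have "inner r r = inner ((x - y) - P (x - y)) r - inner (x - P x) r + inner (y - P y) r"
    by (simp add: r_def inner_diff_left algebra_simps)
  also have "\<dots> = 0"
    using orthogonal_projection_orthogonal[OF P \<open>r \<in> X\<close>] by simp
  finally show ?thesis by (simp add: r_def)
qed

lemma norm_orthogonal_projection_le:
  assumes "orthogonal_projection_on X P"
  shows "norm (P h) \<le> norm h"
proof -
  have "inner (h - P h) (P h) = 0"
    by (rule orthogonal_projection_orthogonal[OF assms orthogonal_projection_in[OF assms]])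
  then have "norm (P h)^2 = inner h (P h)"
    by (simp add: power2_norm_eq_inner inner_diff_left)
  also have "\<dots> \<le> norm h * norm (P h)" by (rule norm_cauchy_schwarz)
  finally have "norm (P h) * norm (P h) \<le> norm h * norm (P h)"
    by (simp add: power2_eq_square)
  then show ?thesis by (cases "norm (P h) = 0") auto
qed

lemma norm_coercive_step_le:
  fixes d y :: "'h::real_inner"
  assumes "\<mu> * norm d^2 \<le> inner y d" "norm y \<le> M * norm d" "0 < \<mu>" "0 < M"
  shows "norm (d - (\<mu> / M^2) *\<^sub>R y)^2 \<le> (1 - \<mu>^2 / M^2) * norm d^2"
proof -
  define \<rho> where "\<rho> = \<mu> / M^2"
  have "norm y^2 \<le> M^2 * norm d^2"
    using assms(2) by (metis norm_ge_zero power_mono power_mult_distrib)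
  then have "\<rho>^2 * norm y^2 \<le> \<rho>^2 * (M^2 * norm d^2)"
    by (simp add: mult_left_mono)
  moreover have "0 < \<rho>" using assms(3,4) by (simp add: \<rho>_def)
  then have "2 * \<rho> * (\<mu> * norm d^2) \<le> 2 * \<rho> * inner y d"
    using assms(1) by simp
  moreover have "norm (d - \<rho> *\<^sub>R y)^2 = norm d^2 - 2 * \<rho> * inner y d + \<rho>^2 * norm y^2"
    by (simp only: power2_norm_eq_inner) (simp add: inner_diff inner_commute algebra_simps power2_eq_square)
  moreover have "norm d^2 - 2 * \<rho> * (\<mu> * norm d^2) + \<rho>^2 * (M^2 * norm d^2)
      = (1 - \<mu>^2 / M^2) * norm d^2"
    using assms(4) by (simp add: \<rho>_def field_simps power2_eq_square)
  ultimately show ?thesis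
    unfolding \<rho>_def by linarith
qed

lemma richardson_step_contraction:
  fixes X :: "'h::real_inner set" and F :: 'h
  assumes P: "orthogonal_projection_on X P" and "subspace X" and K: "linear K"
    and K_bound: "\<And>x. norm (K x) \<le> M * norm x"
    and coercive: "\<And>x. x \<in> X \<Longrightarrow> \<mu> * norm x^2 \<le> inner (K x) x" and "0 < \<mu>" "0 < M"
    and "x \<in> X" "y \<in> X"
  defines "T u \<equiv> u - (\<mu> / M^2) *\<^sub>R P (K u - F)"
  shows "dist (T x) (T y) \<le> sqrt (1 - \<mu>^2 / M^2) * dist x y"
proof -
  define d where "d = x - y"
  have "d \<in> X" using assms(8,9) \<open>subspace X\<close> by (simp add: d_def subspace_diff)
  have "P (K x - F) - P (K y - F) = P (K d)"
    using orthogonal_projection_diff[OF P \<open>subspace X\<close>, of "K x - F" "K y - F"]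
    by (simp add: d_def linear_diff[OF K])
  moreover have "T x - T y = d - (\<mu> / M^2) *\<^sub>R (P (K x - F) - P (K y - F))"
    by (simp add: T_def d_def algebra_simps)
  ultimately have "T x - T y = d - (\<mu> / M^2) *\<^sub>R P (K d)"
    by simp
  moreover have "inner (P (K d)) d = inner (K d) d"
    using orthogonal_projection_orthogonal[OF P \<open>d \<in> X\<close>, of "K d"]
    by (simp add: inner_diff_left)
  moreover have "norm (P (K d)) \<le> M * norm d"
    using norm_orthogonal_projection_le[OF P, of "K d"] K_bound[of d] by linarith
  ultimately have "norm (T x - T y)^2 \<le> (1 - \<mu>^2 / M^2) * norm d^2"
    using norm_coercive_step_le[of \<mu> d "P (K d)" M] coercive[OF \<open>d \<in> X\<close>] \<open>0 < \<mu>\<close> \<open>0 < M\<close>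
    by simp
  then have "sqrt (norm (T x - T y)^2) \<le> sqrt ((1 - \<mu>^2 / M^2) * norm d^2)"
    by (rule real_sqrt_le_mono)
  then show ?thesis by (simp add: dist_norm d_def real_sqrt_mult)
qed

lemma lax_milgram_exists:
  fixes X :: "'h::{real_inner,complete_space} set"
  assumes "subspace X" "closed X" and K: "bounded_linear K"
    and coercive: "\<And>x. x \<in> X \<Longrightarrow> \<mu> * norm x^2 \<le> inner (K x) x" and "0 < \<mu>"
  obtains u where "u \<in> X" "\<And>v. v \<in> X \<Longrightarrow> inner (K u - F) v = 0"
proof -
  obtain P where P: "orthogonal_projection_on X P"
    using orthogonal_projection_exists[OF assms(1,2)] .
  obtain M0 where M0: "\<And>x. norm (K x) \<le> norm x * M0"
    using bounded_linear.pos_bounded[OF K] by blast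
  define M where "M = max M0 \<mu>"
  have "0 < M" "\<mu> \<le> M"
    using \<open>0 < \<mu>\<close> by (auto simp: M_def)
  have K_bound: "norm (K x) \<le> M * norm x" for x
    using M0[of x] mult_right_mono[of M0 M "norm x"] by (simp add: M_def mult.commute)
  define T where "T u = u - (\<mu> / M^2) *\<^sub>R P (K u - F)" for u
  have "T ` X \<subseteq> X"
    using \<open>subspace X\<close>
    by (auto simp: T_def orthogonal_projection_in[OF P] subspace_diff subspace_scale)
  moreover have "dist (T x) (T y) \<le> sqrt (1 - \<mu>^2 / M^2) * dist x y" if "x \<in> X" "y \<in> X" for x y
    unfolding T_def using bounded_linear.linear[OF K] K_bound coercive \<open>0 < \<mu>\<close> \<open>0 < M\<close> that
    by (rule richardson_step_contraction[OF P \<open>subspace X\<close>])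
  moreover have "0 < \<mu>^2 / M^2" "\<mu>^2 / M^2 \<le> 1"
    using \<open>0 < \<mu>\<close> \<open>\<mu> \<le> M\<close> by (auto simp: power_mono)
  then have "0 \<le> sqrt (1 - \<mu>^2 / M^2)" "sqrt (1 - \<mu>^2 / M^2) < 1"
    by auto
  moreover have "complete X" "X \<noteq> {}"
    using assms(1,2) subspace_0 by (auto simp: complete_eq_closed)
  ultimately obtain u where "u \<in> X" "T u = u"
    using Banach_fix[of X "sqrt (1 - \<mu>^2 / M^2)" T] by blast
  then have "P (K u - F) = 0"
    using \<open>0 < \<mu>\<close> \<open>0 < M\<close> by (simp add: T_def)
  then have "inner (K u - F) v = 0" if "v \<in> X" for v
    using orthogonal_projection_orthogonal[OF P that, of "K u - F"] by simp
  with \<open>u \<in> X\<close> show ?thesis by (rule that)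
qed

lemma lax_milgram:
  fixes X :: "'h::{real_inner,complete_space} set"
  assumes "subspace X" "closed X" and K: "bounded_linear K"
    and coercive: "\<And>x. x \<in> X \<Longrightarrow> \<mu> * norm x^2 \<le> inner (K x) x" and "0 < \<mu>"
  shows "\<exists>!u. u \<in> X \<and> (\<forall>v\<in>X. inner (K u - F) v = 0)"
proof (rule ex_ex1I)
  show "\<exists>u. u \<in> X \<and> (\<forall>v\<in>X. inner (K u - F) v = 0)"
    using lax_milgram_exists[OF assms] by metis
next
  fix u u' assume u: "u \<in> X \<and> (\<forall>v\<in>X. inner (K u - F) v = 0)"
    and u': "u' \<in> X \<and> (\<forall>v\<in>X. inner (K u' - F) v = 0)"
  then have "u - u' \<in> X" using \<open>subspace X\<close> by (simp add: subspace_diff)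
  with u u' have "inner (K (u - u')) (u - u') = 0"
    by (simp add: linear_diff[OF bounded_linear.linear[OF K]] inner_diff_left)
  then have "\<mu> * norm (u - u')^2 \<le> 0"
    using coercive[OF \<open>u - u' \<in> X\<close>] by simp
  then show "u = u'"
    using \<open>0 < \<mu>\<close> by (simp add: mult_le_0_iff)
qed

lemma op_app_eqI:
  assumes "lin_op J K T" "(x, y) \<in> T"
  shows "op_app T x = y"
  unfolding op_app_def
proof (rule the_equality)
  fix y' assume "(x, y') \<in> T"
  moreover have "subspace T" using assms(1) by (simp add: lin_op_def)
  ultimately have "(0, y' - y) \<in> T"
    using assms(2) subspace_diff[of T "(x, y')" "(x, y)"] by simp
  then show "y' = y"
    using assms(1) by (auto simp: lin_op_def)
qed (rule assms(2))

lemma inner_complex_structure_right: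
  assumes "complex_structure J"
  shows "inner x (J y) = - inner (J x) y"
  using assms unfolding complex_structure_def by (metis inner_minus_right)

lemma adjoint_iff_inner:
  assumes "complex_structure J0" "complex_structure J1" "lin_op J0 J1 G"
  shows "(w, z) \<in> adjoint J0 J1 G \<longleftrightarrow> (\<forall>(x, g)\<in>G. inner g w = inner x z)"
proof
  assume "(w, z) \<in> adjoint J0 J1 G"
  then show "\<forall>(x, g)\<in>G. inner g w = inner x z"
    by (auto simp: adjoint_def cinner_def)
next
  assume real: "\<forall>(x, g)\<in>G. inner g w = inner x z"
  \<comment> \<open>The imaginary parts agree because G is invariant under the complex structures.\<close>
  have "inner g (J1 w) = inner x (J0 z)" if "(x, g) \<in> G" for x g
  proof -
    have "(J0 x, J1 g) \<in> G" using assms(3) that by (auto simp: lin_op_def)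
    then show ?thesis
      using real by (auto simp: inner_complex_structure_right[OF assms(1)]
          inner_complex_structure_right[OF assms(2)])
  qed
  with real show "(w, z) \<in> adjoint J0 J1 G"
    by (auto simp: adjoint_def cinner_def)
qed

lemma Domain_neg_op [simp]: "Domain (neg_op T) = Domain T"
  by (force simp: neg_op_def)

lemma boundary_problem_iff_variational:
  assumes J0: "complex_structure J0" and J1: "complex_structure J1"
    and G: "lin_op J0 J1 G" and D: "lin_op J1 J0 D"
    and ext: "neg_op (adjoint J0 J1 G) \<subseteq> D" and "q0 \<in> Domain D"
  shows "(y \<in> Domain D \<and> op_app D y = f \<and> y - q0 \<in> Domain (neg_op (adjoint J0 J1 G)))
     \<longleftrightarrow> (\<forall>(x, g)\<in>G. inner (f - op_app D q0) x + inner (y - q0) g = 0)"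
proof -
  have "subspace D" using D by (simp add: lin_op_def)
  have q0: "(q0, op_app D q0) \<in> D"
    using \<open>q0 \<in> Domain D\<close> op_app_eqI[OF D] by force
  have D_shift: "(y, op_app D q0 - z) \<in> D" if "(y - q0, z) \<in> adjoint J0 J1 G" for z
  proof -
    have "(y - q0, - z) \<in> D" using ext that by (auto simp: neg_op_def)
    from subspace_add[OF \<open>subspace D\<close> q0 this] show ?thesis by simp
  qed
  have "(y \<in> Domain D \<and> op_app D y = f \<and> y - q0 \<in> Domain (adjoint J0 J1 G))
      \<longleftrightarrow> (y - q0, op_app D q0 - f) \<in> adjoint J0 J1 G"
  proof
    assume "y \<in> Domain D \<and> op_app D y = f \<and> y - q0 \<in> Domain (adjoint J0 J1 G)"
    then obtain z where "(y - q0, z) \<in> adjoint J0 J1 G" "op_app D y = f" by blast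
    moreover from D_shift[OF this(1)] have "op_app D y = op_app D q0 - z"
      by (rule op_app_eqI[OF D])
    ultimately have "z = op_app D q0 - f"
      by (simp add: algebra_simps)
    with \<open>(y - q0, z) \<in> adjoint J0 J1 G\<close> show "(y - q0, op_app D q0 - f) \<in> adjoint J0 J1 G"
      by simp
  next
    assume adj: "(y - q0, op_app D q0 - f) \<in> adjoint J0 J1 G"
    have "(y, op_app D q0 - (op_app D q0 - f)) \<in> D" by (rule D_shift[OF adj])
    then have "(y, f) \<in> D" by simp
    then show "y \<in> Domain D \<and> op_app D y = f \<and> y - q0 \<in> Domain (adjoint J0 J1 G)"
      using adj op_app_eqI[OF D] by (simp add: Domain.DomainI)
  qed
  also have "\<dots> \<longleftrightarrow> (\<forall>(x, g)\<in>G. inner g (y - q0) = inner x (op_app D q0 - f))"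
    by (rule adjoint_iff_inner[OF J0 J1 G])
  also have "\<dots> \<longleftrightarrow> (\<forall>(x, g)\<in>G. inner (f - op_app D q0) x + inner (y - q0) g = 0)"
  proof -
    have "inner g (y - q0) = inner x (op_app D q0 - f)
        \<longleftrightarrow> inner (f - op_app D q0) x + inner (y - q0) g = 0" for x g
      by (auto simp: inner_commute[of g] inner_commute[of x] inner_diff_left)
    then show ?thesis by simp
  qed
  finally show ?thesis by simp
qed

lemma ex1_graph_point:
  assumes "lin_op J K T" "\<exists>!p. p \<in> T \<and> P p"
  shows "\<exists>!x. x \<in> Domain T \<and> P (x, op_app T x)"
proof -
  have graph: "x \<in> Domain T \<longleftrightarrow> (x, op_app T x) \<in> T" for x
    using op_app_eqI[OF assms(1)] by force
  from assms(2) obtain p where p: "p \<in> T" "P p" and unique: "\<And>q. q \<in> T \<Longrightarrow> P q \<Longrightarrow> q = p"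
    by blast
  show ?thesis
  proof (rule ex1I)
    show "fst p \<in> Domain T \<and> P (fst p, op_app T (fst p))"
      using p op_app_eqI[OF assms(1), of "fst p" "snd p"] by (cases p) force
  next
    fix x assume "x \<in> Domain T \<and> P (x, op_app T x)"
    then have "(x, op_app T x) = p" using unique graph by blast
    then show "x = fst p" by auto
  qed
qed

lemma coercive_inner_ge:
  assumes "coercive J M"
  obtains \<mu> where "0 < \<mu>" "\<And>x. \<mu> * norm x^2 \<le> inner (M x) x"
  using assms unfolding coercive_def cinner_def by auto

lemma inner_map_pair_ge:
  assumes "\<And>x. \<mu> * norm x^2 \<le> inner (f x) x" "\<And>y. \<nu> * norm y^2 \<le> inner (g y) y"
  shows "min \<mu> \<nu> * norm p^2 \<le> inner (f (fst p), g (snd p)) p"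
proof -
  have "min \<mu> \<nu> * norm (fst p)^2 \<le> \<mu> * norm (fst p)^2"
    "min \<mu> \<nu> * norm (snd p)^2 \<le> \<nu> * norm (snd p)^2"
    by (simp_all add: mult_right_mono)
  with assms(1)[of "fst p"] assms(2)[of "snd p"] show ?thesis
    by (cases p) (simp add: norm_Pair algebra_simps)
qed

theorem proposition2p15:
  fixes J0 :: "'a::{real_inner, complete_space} \<Rightarrow> 'a"
    and J1 :: "'b::{real_inner, complete_space} \<Rightarrow> 'b"
    and G :: "('a \<times> 'b) set" and D :: "('b \<times> 'a) set"
    and a :: "'b \<Rightarrow> 'b" and m :: "'a \<Rightarrow> 'a" and q0 :: 'b
  assumes "complex_structure J0" and "complex_structure J1"
    and "lin_op J0 J1 G" and "densely_defined G" and "closed_op G"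
    and "lin_op J1 J0 D" and "densely_defined D" and "closed_op D"
    and "neg_op (adjoint J0 J1 G) \<subseteq> D"
    and "cbounded J1 a" and "coercive J1 a"
    and "cbounded J0 m" and "coercive J0 m"
    and "q0 \<in> BD J0 J1 D (neg_op (adjoint J0 J1 G))"
  shows "\<exists>!u. u \<in> {v \<in> Domain G. a (op_app G v) \<in> Domain D}
           \<and> m u - op_app D (a (op_app G u)) = 0
           \<and> a (op_app G u) - q0 \<in> Domain (neg_op (adjoint J0 J1 G))"
proof -
  obtain \<mu> \<nu> where "0 < \<mu>" "\<And>x. \<mu> * norm x^2 \<le> inner (m x) x"
    and "0 < \<nu>" "\<And>y. \<nu> * norm y^2 \<le> inner (a y) y"
    using coercive_inner_ge[OF \<open>coercive J0 m\<close>] coercive_inner_ge[OF \<open>coercive J1 a\<close>] by metis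
  define K where "K p = (m (fst p), a (snd p))" for p :: "'a \<times> 'b"
  have "bounded_linear K"
    using assms(10,12) unfolding K_def cbounded_def
    by (intro bounded_linear_Pair bounded_linear_compose[OF _ bounded_linear_fst]
        bounded_linear_compose[OF _ bounded_linear_snd]) auto
  moreover have "subspace G" "closed G"
    using assms(3,5) by (simp_all add: lin_op_def closed_op_def)
  moreover have "min \<mu> \<nu> * norm p^2 \<le> inner (K p) p" for p
    unfolding K_def by (rule inner_map_pair_ge) fact+
  ultimately have "\<exists>!p. p \<in> G \<and> (\<forall>v\<in>G. inner (K p - (op_app D q0, q0)) v = 0)"
    using \<open>0 < \<mu>\<close> \<open>0 < \<nu>\<close> by (intro lax_milgram[where \<mu> = "min \<mu> \<nu>"]) auto
  then have "\<exists>!u. u \<in> Domain G \<and> (\<forall>v\<in>G. inner (K (u, op_app G u) - (op_app D q0, q0)) v = 0)"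
    by (rule ex1_graph_point[OF assms(3)])
  moreover have "q0 \<in> Domain D"
    using assms(14) by (simp add: BD_def)
  then have "(u \<in> {v \<in> Domain G. a (op_app G v) \<in> Domain D}
           \<and> m u - op_app D (a (op_app G u)) = 0
           \<and> a (op_app G u) - q0 \<in> Domain (neg_op (adjoint J0 J1 G)))
      \<longleftrightarrow> u \<in> Domain G \<and> (\<forall>v\<in>G. inner (K (u, op_app G u) - (op_app D q0, q0)) v = 0)" for u
    using boundary_problem_iff_variational[OF assms(1,2,3,6,9), of q0 "a (op_app G u)" "m u"]
    by (auto simp: K_def case_prod_beta')
  ultimately show ?thesis by (simp only:)
qed

end
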